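(* For a $T_0$ space $X$, $X$ is second-countable if and only if its Smyth power space $P_S(X)$ is second-countable.
   Context: The specialization order of $X$ is $x\le y$ iff $x\in\overline{\{y\}}$; saturated sets are upper sets in this order. $\mathsf{K}(X)$ is the set of nonempty compact saturated subsets of $X$. For open $U\subseteq X$, $\Box U=\{K\in\mathsf{K}(X):K\subseteq U\}$; the Smyth power space $P_S(X)$ is $\mathsf{K}(X)$ with the topology having base $\{\Box U: U\text{ open}\}$. *)

theory Defs
  imports "HOL-Analysis.Analysis"
begin

definition spec_le :: "'a topology \<Rightarrow> 'a \<Rightarrow> 'a \<Rightarrow> bool" where
  "spec_le X x y \<longleftrightarrow> x \<in> topspace X \<and> y \<in> topspace X \<and> x \<in> X closure_of {y}"

definition saturatedin :: "'a topology \<Rightarrow> 'a set \<Rightarrow> bool" where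
  "saturatedin X S \<longleftrightarrow> S \<subseteq> topspace X \<and> (\<forall>x y. x \<in> S \<and> spec_le X x y \<longrightarrow> y \<in> S)"

definition smyth_K :: "'a topology \<Rightarrow> 'a set set" where
  "smyth_K X = {K. K \<noteq> {} \<and> compactin X K \<and> saturatedin X K}"

definition smyth_box :: "'a topology \<Rightarrow> 'a set \<Rightarrow> 'a set set" where
  "smyth_box X U = {K \<in> smyth_K X. K \<subseteq> U}"

definition smyth_power :: "'a topology \<Rightarrow> 'a set topology" where
  "smyth_power X = topology_generated_by {smyth_box X U | U. openin X U}"

end

theory Submission
  imports Defs
begin

text \<open>
  A countable base \<open>\<B>\<close> of \<open>X\<close> yields the countable base \<open>{\<box>(\<Union>\<F>) | \<F> \<subseteq> \<B> finite}\<close>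
  of \<open>P\<^sub>S(X)\<close>: a compact \<open>K \<subseteq> U\<close> is covered by finitely many members of \<open>\<B>\<close> inside \<open>U\<close>.
  Conversely, \<open>x \<mapsto> \<up>x\<close> is a continuous map \<open>X \<rightarrow> P\<^sub>S(X)\<close> with \<open>\<up>x \<in> \<box>U \<longleftrightarrow> x \<in> U\<close>
  for open \<open>U\<close>, so the preimages of a countable base of \<open>P\<^sub>S(X)\<close> form a base of \<open>X\<close>.
  Neither direction needs the \<open>T\<^sub>0\<close> hypothesis.
\<close>

definition spec_upset :: "'a topology \<Rightarrow> 'a \<Rightarrow> 'a set" where
  "spec_upset X x = {y. spec_le X x y}"

lemma spec_le_refl: "x \<in> topspace X \<Longrightarrow> spec_le X x x"
  unfolding spec_le_def by (simp add: closure_of_hull hull_inc)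

lemma spec_le_trans:
  assumes "spec_le X x y" "spec_le X y z"
  shows "spec_le X x z"
proof -
  have "X closure_of {y} \<subseteq> X closure_of {z}"
    using assms(2) unfolding spec_le_def
    by (metis closure_of_closure_of closure_of_mono empty_subsetI insert_subset)
  then show ?thesis
    using assms unfolding spec_le_def by blast
qed

lemma openin_spec_le_upward:
  assumes "openin X U" "x \<in> U" "spec_le X x y"
  shows "y \<in> U"
  using assms unfolding spec_le_def in_closure_of by blast

lemma spec_upset_subset_openin_iff:
  assumes "openin X U" "x \<in> topspace X"
  shows "spec_upset X x \<subseteq> U \<longleftrightarrow> x \<in> U"
  using openin_spec_le_upward[OF assms(1)] spec_le_refl[OF assms(2)]
  unfolding spec_upset_def by auto

lemma spec_upset_in_smyth_K:
  assumes "x \<in> topspace X"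
  shows "spec_upset X x \<in> smyth_K X"
proof -
  have self: "x \<in> spec_upset X x"
    using assms by (simp add: spec_upset_def spec_le_refl)
  have upset: "spec_upset X x \<subseteq> topspace X"
    unfolding spec_upset_def spec_le_def by blast
  have "compactin X (spec_upset X x)"
    unfolding compactin_def
  proof (intro conjI upset allI impI)
    fix \<U> assume "(\<forall>U\<in>\<U>. openin X U) \<and> spec_upset X x \<subseteq> \<Union>\<U>"
    then obtain U where "U \<in> \<U>" "openin X U" "x \<in> U"
      using self by blast
    then have "finite {U} \<and> {U} \<subseteq> \<U> \<and> spec_upset X x \<subseteq> \<Union>{U}"
      using spec_upset_subset_openin_iff[OF \<open>openin X U\<close> assms] by simp
    then show "\<exists>\<F>. finite \<F> \<and> \<F> \<subseteq> \<U> \<and> spec_upset X x \<subseteq> \<Union>\<F>"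
      by blast
  qed
  moreover have "saturatedin X (spec_upset X x)"
    using upset spec_le_trans[of X x] unfolding saturatedin_def spec_upset_def by blast
  ultimately show ?thesis
    using self unfolding smyth_K_def by blast
qed

lemma spec_upset_in_smyth_box_iff:
  assumes "openin X U" "x \<in> topspace X"
  shows "spec_upset X x \<in> smyth_box X U \<longleftrightarrow> x \<in> U"
  using spec_upset_subset_openin_iff[OF assms] spec_upset_in_smyth_K[OF assms(2)]
  unfolding smyth_box_def by blast

lemma smyth_box_mono: "U \<subseteq> V \<Longrightarrow> smyth_box X U \<subseteq> smyth_box X V"
  unfolding smyth_box_def by blast

lemma smyth_box_Int: "smyth_box X (U \<inter> V) = smyth_box X U \<inter> smyth_box X V"
  unfolding smyth_box_def by blast

lemma openin_smyth_box: "openin X U \<Longrightarrow> openin (smyth_power X) (smyth_box X U)"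
  unfolding smyth_power_def by (rule topology_generated_by_Basis) blast

lemma openin_smyth_power_box_neighbourhood:
  assumes "openin (smyth_power X) W" "K \<in> W"
  shows "\<exists>U. openin X U \<and> K \<in> smyth_box X U \<and> smyth_box X U \<subseteq> W"
proof -
  have "generate_topology_on {smyth_box X U | U. openin X U} W"
    using assms(1) unfolding smyth_power_def by (simp add: openin_topology_generated_by_iff)
  then show ?thesis
    using assms(2)
  proof (induction arbitrary: K)
    case Empty
    then show ?case by simp
  next
    case (Int W1 W2)
    obtain U1 where "openin X U1" "K \<in> smyth_box X U1" "smyth_box X U1 \<subseteq> W1"
      using Int.IH(1) Int.prems by blast
    moreover obtain U2 where "openin X U2" "K \<in> smyth_box X U2" "smyth_box X U2 \<subseteq> W2"
      using Int.IH(2) Int.prems by blast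
    ultimately have "openin X (U1 \<inter> U2) \<and> K \<in> smyth_box X (U1 \<inter> U2)
                     \<and> smyth_box X (U1 \<inter> U2) \<subseteq> W1 \<inter> W2"
      by (auto simp: smyth_box_Int)
    then show ?case by blast
  next
    case (UN \<W>)
    then obtain W' where "W' \<in> \<W>" "K \<in> W'"
      by blast
    then show ?case
      using UN.IH[OF \<open>W' \<in> \<W>\<close> \<open>K \<in> W'\<close>] by blast
  next
    case (Basis S)
    then show ?case by blast
  qed
qed

lemma continuous_map_spec_upset: "continuous_map X (smyth_power X) (spec_upset X)"
  unfolding smyth_power_def
proof (rule continuous_on_generated_topo)
  fix S assume "S \<in> {smyth_box X U | U. openin X U}"
  then obtain U where U: "openin X U" "S = smyth_box X U"
    by blast
  have "spec_upset X -` S \<inter> topspace X = U"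
    using U openin_subset[OF U(1)] by (auto simp: spec_upset_in_smyth_box_iff)
  then show "openin X (spec_upset X -` S \<inter> topspace X)"
    using U(1) by simp
next
  have "spec_upset X ` topspace X \<subseteq> smyth_box X (topspace X)"
    by (auto simp: spec_upset_in_smyth_box_iff)
  then show "spec_upset X ` topspace X \<subseteq> \<Union>{smyth_box X U | U. openin X U}"
    by blast
qed

lemma compactin_finite_union_from_base:
  assumes base: "\<forall>V\<in>\<B>. openin X V" "\<forall>U x. openin X U \<and> x \<in> U \<longrightarrow> (\<exists>V\<in>\<B>. x \<in> V \<and> V \<subseteq> U)"
    and "compactin X K" "K \<subseteq> U" "openin X U"
  obtains \<F> where "finite \<F>" "\<F> \<subseteq> \<B>" "K \<subseteq> \<Union>\<F>" "\<Union>\<F> \<subseteq> U"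
proof -
  have "K \<subseteq> \<Union>{V \<in> \<B>. V \<subseteq> U}"
    using assms(4,5) base(2) by blast
  then obtain \<F> where "finite \<F>" "\<F> \<subseteq> {V \<in> \<B>. V \<subseteq> U}" "K \<subseteq> \<Union>\<F>"
    using assms(3) base(1) unfolding compactin_def by (metis (no_types, lifting) mem_Collect_eq)
  then show thesis
    using that by blast
qed

lemma second_countable_smyth_power:
  assumes "second_countable X"
  shows "second_countable (smyth_power X)"
proof -
  obtain \<B> where \<B>: "countable \<B>" "\<forall>V\<in>\<B>. openin X V"
    "\<forall>U x. openin X U \<and> x \<in> U \<longrightarrow> (\<exists>V\<in>\<B>. x \<in> V \<and> V \<subseteq> U)"
    using assms unfolding second_countable_def by blast
  define \<C> where "\<C> = (\<lambda>\<F>. smyth_box X (\<Union>\<F>)) ` {\<F>. finite \<F> \<and> \<F> \<subseteq> \<B>}"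
  have "countable \<C>"
    unfolding \<C>_def using \<B>(1) countable_Collect_finite_subset by blast
  moreover have "\<forall>V\<in>\<C>. openin (smyth_power X) V"
    unfolding \<C>_def using \<B>(2) by (auto intro!: openin_smyth_box)
  moreover have "\<exists>V\<in>\<C>. K \<in> V \<and> V \<subseteq> W" if W: "openin (smyth_power X) W" "K \<in> W" for W K
  proof -
    obtain U where U: "openin X U" "K \<in> smyth_box X U" "smyth_box X U \<subseteq> W"
      using openin_smyth_power_box_neighbourhood[OF W] by blast
    then have K: "compactin X K" "K \<subseteq> U"
      unfolding smyth_box_def smyth_K_def by auto
    obtain \<F> where \<F>: "finite \<F>" "\<F> \<subseteq> \<B>" "K \<subseteq> \<Union>\<F>" "\<Union>\<F> \<subseteq> U"
      by (rule compactin_finite_union_from_base[OF \<B>(2,3) K U(1)])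
    have "K \<in> smyth_box X (\<Union>\<F>)"
      using U(2) \<F>(3) by (simp add: smyth_box_def)
    moreover have "smyth_box X (\<Union>\<F>) \<subseteq> W"
      using smyth_box_mono[OF \<F>(4)] U(3) by blast
    moreover have "smyth_box X (\<Union>\<F>) \<in> \<C>"
      using \<F>(1,2) unfolding \<C>_def by blast
    ultimately show ?thesis
      by blast
  qed
  ultimately show ?thesis
    unfolding second_countable_def by (intro exI[of _ \<C>] conjI allI impI) auto
qed

lemma second_countable_initial_map:
  assumes "continuous_map X Y f"
    and initial: "\<And>U. openin X U \<Longrightarrow> \<exists>V. openin Y V \<and> U = {x \<in> topspace X. f x \<in> V}"
    and "second_countable Y"
  shows "second_countable X"
proof -
  obtain \<C> where \<C>: "countable \<C>" "\<forall>V\<in>\<C>. openin Y V"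
    "\<forall>V y. openin Y V \<and> y \<in> V \<longrightarrow> (\<exists>W\<in>\<C>. y \<in> W \<and> W \<subseteq> V)"
    using assms(3) unfolding second_countable_def by blast
  define \<B> where "\<B> = (\<lambda>W. {x \<in> topspace X. f x \<in> W}) ` \<C>"
  have "countable \<B>"
    unfolding \<B>_def using \<C>(1) by (rule countable_image)
  moreover have "\<forall>U\<in>\<B>. openin X U"
    unfolding \<B>_def using \<C>(2) openin_continuous_map_preimage[OF assms(1)] by auto
  moreover have "\<exists>B\<in>\<B>. x \<in> B \<and> B \<subseteq> U" if U: "openin X U" "x \<in> U" for U x
  proof -
    obtain V where V: "openin Y V" "U = {x \<in> topspace X. f x \<in> V}"
      using initial[OF U(1)] by blast
    moreover have "f x \<in> V"
      using V(2) U(2) by blast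
    ultimately obtain W where W: "W \<in> \<C>" "f x \<in> W" "W \<subseteq> V"
      using \<C>(3) by blast
    have "{y \<in> topspace X. f y \<in> W} \<in> \<B>"
      unfolding \<B>_def using W(1) by (rule imageI)
    moreover have "x \<in> {y \<in> topspace X. f y \<in> W}" "{y \<in> topspace X. f y \<in> W} \<subseteq> U"
      using V(2) U(2) W(2,3) by auto
    ultimately show ?thesis
      by (intro bexI) auto
  qed
  ultimately show ?thesis
    unfolding second_countable_def by (intro exI[of _ \<B>] conjI allI impI) auto
qed

lemma second_countable_from_smyth_power:
  assumes "second_countable (smyth_power X)"
  shows "second_countable X"
proof (rule second_countable_initial_map[OF continuous_map_spec_upset _ assms])
  fix U assume "openin X U"
  then have "U = {x \<in> topspace X. spec_upset X x \<in> smyth_box X U}"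
    using openin_subset[of X U] by (auto simp: spec_upset_in_smyth_box_iff)
  then show "\<exists>V. openin (smyth_power X) V \<and> U = {x \<in> topspace X. spec_upset X x \<in> V}"
    using openin_smyth_box[OF \<open>openin X U\<close>] by blast
qed

theorem mainTheorem5:
  fixes X :: "'a topology"
  assumes "t0_space X"
  shows "second_countable X \<longleftrightarrow> second_countable (smyth_power X)"
  using second_countable_smyth_power second_countable_from_smyth_power by metis

end
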